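(* There exists a family $(C_n)_{n\ge1}$, where $C_n$ is a circuit on $n$ qubits composed of controlled-not gates and one-qubit diagonal gates, with the following property: for every polynomial $p$ there is a polynomial $q$ such that for all $n$, every quantum circuit in which the operator computed by $C_n$ is embedded using at most $p(n)$ ancillae has depth at least $2^n/q(n)$. In other words, these circuits cannot be parallelized to less than exponential depth with a polynomial number of ancillae.
   Context: Qubits have computational basis $|0\rangle,|1\rangle$. The controlled-not gate is $|a,b\rangle\mapsto|a,a\oplus b\rangle$; a one-qubit diagonal gate is $\mathrm{diag}(e^{i\alpha},e^{i\beta})$ on a single qubit. A one-layer circuit is a tensor product of arbitrary one-qubit and two-qubit unitary gates acting on pairwise disjoint sets of qubits; a quantum circuit of depth $d$ is a product of $d$ one-layer circuits. An operator $F$ on $n$ qubits is embedded in an operator $M$ on $n+m$ qubits using $m$ ancillae if $M(|\psi\rangle\otimes|0\cdots0\rangle)=(F|\psi\rangle)\otimes|0\cdots0\rangle$ for all $|\psi\rangle$. *)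

theory Defs
  imports Complex_Main "HOL-Computational_Algebra.Polynomial"
begin

text \<open>Computational basis states of N qubits (qubits 0..N-1): bit assignments
  nat => bool that are False outside {0..<N}.\<close>

type_synonym bits = "nat \<Rightarrow> bool"
type_synonym qop = "bits \<Rightarrow> bits \<Rightarrow> complex"
type_synonym qvec = "bits \<Rightarrow> complex"

definition basis_on :: "nat set \<Rightarrow> bits set" where
  "basis_on S = {x. \<forall>k. x k \<longrightarrow> k \<in> S}"

abbreviation basis :: "nat \<Rightarrow> bits set" where
  "basis N \<equiv> basis_on {..<N}"

definition idm :: qop where
  "idm x y = (if x = y then 1 else 0)"

definition matmul :: "nat \<Rightarrow> qop \<Rightarrow> qop \<Rightarrow> qop" where
  "matmul N A B x y = (\<Sum>z\<in>basis N. A x z * B z y)"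

definition apply_op :: "nat \<Rightarrow> qop \<Rightarrow> qvec \<Rightarrow> qvec" where
  "apply_op N A v x = (\<Sum>y\<in>basis N. A x y * v y)"

definition unitary_on :: "bits set \<Rightarrow> qop \<Rightarrow> bool" where
  "unitary_on A U \<longleftrightarrow> (\<forall>x\<in>A. \<forall>y\<in>A.
     (\<Sum>z\<in>A. cnj (U z x) * U z y) = (if x = y then 1 else 0))"

text \<open>Arbitrary gate: a unitary U acting on the qubits in S (U indexed by bit
  assignments supported in S), extended by the identity on all other qubits.\<close>

definition restr :: "nat set \<Rightarrow> bits \<Rightarrow> bits" where
  "restr S x = (\<lambda>k. k \<in> S \<and> x k)"

definition gate_mat :: "nat set \<times> qop \<Rightarrow> qop" where
  "gate_mat g x y = (let (S, U) = g in
     if (\<forall>k. k \<notin> S \<longrightarrow> x k = y k) then U (restr S x) (restr S y) else 0)"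

definition valid_gate :: "nat \<Rightarrow> nat set \<times> qop \<Rightarrow> bool" where
  "valid_gate N g \<longleftrightarrow> (let (S, U) = g in
     S \<noteq> {} \<and> card S \<le> 2 \<and> S \<subseteq> {..<N} \<and> unitary_on (basis_on S) U)"

definition layer_ok :: "nat \<Rightarrow> (nat set \<times> qop) list \<Rightarrow> bool" where
  "layer_ok N gs \<longleftrightarrow> (\<forall>g\<in>set gs. valid_gate N g) \<and>
     (\<forall>i<length gs. \<forall>j<length gs. i \<noteq> j \<longrightarrow> fst (gs ! i) \<inter> fst (gs ! j) = {})"

definition layer_op :: "nat \<Rightarrow> (nat set \<times> qop) list \<Rightarrow> qop" where
  "layer_op N gs = foldr (\<lambda>g A. matmul N (gate_mat g) A) gs idm"

definition circuit_of_depth :: "nat \<Rightarrow> nat \<Rightarrow> qop \<Rightarrow> bool" where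
  "circuit_of_depth N d M \<longleftrightarrow> (\<exists>Ls. length Ls = d \<and> (\<forall>L\<in>set Ls. layer_ok N L) \<and>
     (\<forall>x\<in>basis N. \<forall>y\<in>basis N.
        M x y = foldr (\<lambda>L A. matmul N (layer_op N L) A) Ls idm x y))"

text \<open>Embedding of an n-qubit operator F into an (n+m)-qubit operator M, ancillae
  being qubits n..n+m-1:  M(psi \<otimes> |0..0>) = (F psi) \<otimes> |0..0>.\<close>

definition zext :: "nat \<Rightarrow> qvec \<Rightarrow> qvec" where
  "zext n v y = (if y \<in> basis n then v y else 0)"

definition embeds :: "nat \<Rightarrow> nat \<Rightarrow> qop \<Rightarrow> qop \<Rightarrow> bool" where
  "embeds n m F M \<longleftrightarrow> (\<forall>\<psi>. \<forall>x\<in>basis (n + m).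
     apply_op (n + m) M (zext n \<psi>) x = zext n (apply_op n F \<psi>) x)"

datatype cgate = CNOT nat nat | Diag nat real real

fun cgate_ok :: "nat \<Rightarrow> cgate \<Rightarrow> bool" where
  "cgate_ok n (CNOT a b) \<longleftrightarrow> a < n \<and> b < n \<and> a \<noteq> b"
| "cgate_ok n (Diag i \<alpha> \<beta>) \<longleftrightarrow> i < n"

text \<open>CNOT with control a, target b: |..x_a..x_b..> \<mapsto> |..x_a..(x_a xor x_b)..>;
  Diag i \<alpha> \<beta> = diag(e^{i\<alpha>}, e^{i\<beta>}) on qubit i.\<close>

fun cgate_mat :: "cgate \<Rightarrow> qop" where
  "cgate_mat (CNOT a b) x y =
     (if (\<forall>k. k \<noteq> b \<longrightarrow> x k = y k) \<and> x b = (y a \<noteq> y b) then 1 else 0)"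
| "cgate_mat (Diag i \<alpha> \<beta>) x y =
     (if x = y then (if x i then exp (\<i> * of_real \<beta>) else exp (\<i> * of_real \<alpha>)) else 0)"

definition cnot_diag_circuit :: "nat \<Rightarrow> cgate list \<Rightarrow> bool" where
  "cnot_diag_circuit n gs \<longleftrightarrow> (\<forall>g\<in>set gs. cgate_ok n g)"

definition cop :: "nat \<Rightarrow> cgate list \<Rightarrow> qop" where
  "cop n gs = foldr (\<lambda>g A. matmul n (cgate_mat g) A) gs idm"

end

theory Submission
  imports Defs "HOL-Library.FuncSet" "HOL-Library.Function_Algebras"
begin

(* C_n is a product of 2^n - 1 phase blocks; block j multiplies a basis state y by e^(i c_j)
   when y has odd parity on the bits of j. So C_n is diagonal with phases
   phi(y) = sum_j c_j [odd parity], and the Walsh transform recovers every c_j from phi,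
   stably. With c_j = a_j / (R 2^(n+1)) and a_j in {1..R}, phi stays in [0, 1/2], where
   e^(i phi) determines phi stably; hence any fixed matrix is diagonally close to only
   boundedly many (independently of R) of the R^(2^n - 1) choices of a.
   Conversely, rounding the gates of a depth-d circuit on n + m qubits to a grid of mesh 1/R
   moves its matrix by at most K/R, with K independent of R, and there are only about
   R^(32 d (n+m)) rounded circuits. If 32 d (n+m) + 2 <= 2^n, these cannot cover all choices
   of a once R is large, so some C_n is embedded in no such circuit: 2^n <= 33 d (n+m),
   and m <= p(n) turns this into 2^n <= d q(n). *)

section \<open>Computational basis states and Walsh characters\<close>

lemma basis_on_subset_indicators: "basis_on S \<subseteq> (\<lambda>A k. k \<in> A) ` Pow S"
proof
  fix x assume "x \<in> basis_on S"
  then have "{k. x k} \<in> Pow S" and "x = (\<lambda>k. k \<in> {k. x k})"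
    by (auto simp: basis_on_def)
  then show "x \<in> (\<lambda>A k. k \<in> A) ` Pow S" by blast
qed

lemma finite_basis_on: "finite S \<Longrightarrow> finite (basis_on S)"
  using basis_on_subset_indicators by (meson finite_Pow_iff finite_imageI finite_subset)

lemma card_basis_on_le:
  assumes "finite S"
  shows "card (basis_on S) \<le> 2 ^ card S"
proof -
  have "card (basis_on S) \<le> card ((\<lambda>A k. k \<in> A) ` Pow S)"
    using basis_on_subset_indicators assms by (intro card_mono) auto
  also have "\<dots> \<le> card (Pow S)"
    using assms by (intro card_image_le) simp
  finally show ?thesis
    using assms by (simp add: card_Pow)
qed

lemma finite_basis: "finite (basis N)"
  by (simp add: finite_basis_on)

lemma basis_mono: "n \<le> N \<Longrightarrow> x \<in> basis n \<Longrightarrow> x \<in> basis N"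
  by (auto simp: basis_on_def)

lemma sum_basis_Suc:
  fixes f :: "bits \<Rightarrow> 'a :: comm_monoid_add"
  shows "(\<Sum>x\<in>basis (Suc n). f x) = (\<Sum>x\<in>basis n. f x + f (x(n := True)))"
proof -
  have split: "basis (Suc n) = basis n \<union> (\<lambda>x. x(n := True)) ` basis n"
  proof (intro equalityI subsetI)
    fix x assume x: "x \<in> basis (Suc n)"
    show "x \<in> basis n \<union> (\<lambda>x. x(n := True)) ` basis n"
    proof (cases "x n")
      case True
      then have "x = (x(n := False))(n := True)" by (auto simp: fun_eq_iff)
      moreover have "x(n := False) \<in> basis n"
        using x by (auto simp: basis_on_def less_Suc_eq)
      ultimately show ?thesis by blast
    next
      case False
      then show ?thesis using x by (auto simp: basis_on_def less_Suc_eq)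
    qed
  qed (auto simp: basis_on_def split: if_splits)
  have inj: "inj_on (\<lambda>x. x(n := True)) (basis n)"
  proof (rule inj_onI)
    fix x y assume "x \<in> basis n" "y \<in> basis n" "x(n := True) = y(n := True)"
    then show "x = y" by (auto simp: basis_on_def fun_eq_iff split: if_splits)
  qed
  have "basis n \<inter> (\<lambda>x. x(n := True)) ` basis n = {}"
    by (force simp: basis_on_def)
  then have "(\<Sum>x\<in>basis (Suc n). f x) = (\<Sum>x\<in>basis n. f x) + (\<Sum>x\<in>basis n. f (x(n := True)))"
    unfolding split by (simp add: sum.union_disjoint finite_basis sum.reindex[OF inj])
  then show ?thesis by (simp add: sum.distrib)
qed

lemma basis_on_empty: "basis_on {} = {\<lambda>_. False}"
  by (auto simp: basis_on_def)

lemma card_basis: "card (basis n) = 2 ^ n"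
proof (induction n)
  case (Suc n)
  have "card (basis (Suc n)) = (\<Sum>x\<in>basis (Suc n). 1)" by simp
  also have "\<dots> = 2 * card (basis n)" by (simp only: sum_basis_Suc) simp
  finally show ?case using Suc.IH by simp
qed (simp add: basis_on_empty)

definition walsh :: "nat \<Rightarrow> (nat \<Rightarrow> bool) \<Rightarrow> bits \<Rightarrow> real" where
  "walsh n u x = (\<Prod>k<n. if u k \<and> x k then -1 else 1)"

lemma walsh_mult: "walsh n u x * walsh n v x = walsh n (\<lambda>k. u k \<noteq> v k) x"
  unfolding walsh_def prod.distrib[symmetric] by (intro prod.cong) auto

lemma abs_walsh: "\<bar>walsh n u x\<bar> = 1"
  unfolding walsh_def abs_prod by (intro prod.neutral) auto

lemma sum_walsh: "(\<Sum>x\<in>basis n. walsh n u x) = (if \<forall>k<n. \<not> u k then 2 ^ n else 0)"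
proof (induction n)
  case 0
  show ?case by (simp add: basis_on_empty walsh_def)
next
  case (Suc n)
  have "walsh (Suc n) u x + walsh (Suc n) u (x(n := True)) = walsh n u x * (if u n then 0 else 2)"
    if "x \<in> basis n" for x
  proof -
    have "walsh n u (x(n := True)) = walsh n u x"
      unfolding walsh_def by (intro prod.cong) auto
    moreover have "\<not> x n" using that by (auto simp: basis_on_def)
    ultimately show ?thesis by (simp add: walsh_def)
  qed
  then have "(\<Sum>x\<in>basis (Suc n). walsh (Suc n) u x)
      = (\<Sum>x\<in>basis n. walsh n u x) * (if u n then 0 else 2)"
    by (simp add: sum_basis_Suc sum_distrib_right cong: sum.cong)
  then show ?case using Suc.IH by (auto simp: less_Suc_eq)
qed

section \<open>Matrix products and their perturbation\<close>

definition eq_on_basis :: "nat \<Rightarrow> qop \<Rightarrow> qop \<Rightarrow> bool" where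
  "eq_on_basis N A B \<longleftrightarrow> (\<forall>x\<in>basis N. \<forall>y\<in>basis N. A x y = B x y)"

definition matprod :: "nat \<Rightarrow> qop list \<Rightarrow> qop" where
  "matprod N As = foldr (matmul N) As idm"

lemma matprod_Nil [simp]: "matprod N [] = idm"
  and matprod_Cons [simp]: "matprod N (A # As) = matmul N A (matprod N As)"
  by (simp_all add: matprod_def)

lemma layer_op_eq_matprod: "layer_op N gs = matprod N (map gate_mat gs)"
  by (simp add: layer_op_def matprod_def foldr_map comp_def)

lemma matmul_assoc: "matmul N (matmul N A B) C = matmul N A (matmul N B C)"
proof (intro ext)
  fix x y
  have "matmul N (matmul N A B) C x y = (\<Sum>z\<in>basis N. \<Sum>w\<in>basis N. A x w * B w z * C z y)"
    unfolding matmul_def by (simp add: sum_distrib_right)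
  also have "\<dots> = (\<Sum>w\<in>basis N. \<Sum>z\<in>basis N. A x w * B w z * C z y)"
    by (rule sum.swap)
  also have "\<dots> = matmul N A (matmul N B C) x y"
    unfolding matmul_def by (simp add: sum_distrib_left mult.assoc)
  finally show "matmul N (matmul N A B) C x y = matmul N A (matmul N B C) x y" .
qed

lemma matmul_idm_left: "x \<in> basis N \<Longrightarrow> matmul N idm B x y = B x y"
  unfolding matmul_def idm_def by (simp add: if_distrib[of "\<lambda>t. t * _"] finite_basis cong: if_cong)

lemma matmul_cong_right:
  "eq_on_basis N B B' \<Longrightarrow> y \<in> basis N \<Longrightarrow> matmul N A B x y = matmul N A B' x y"
  unfolding matmul_def eq_on_basis_def by (intro sum.cong) auto

lemma matmul_diff_left: "matmul N (A - B) C = matmul N A C - matmul N B C"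
  by (simp add: fun_eq_iff matmul_def left_diff_distrib sum_subtractf)

lemma matmul_diff_right: "matmul N A (B - C) = matmul N A B - matmul N A C"
  by (simp add: fun_eq_iff matmul_def right_diff_distrib sum_subtractf)

lemma matprod_append:
  "eq_on_basis N (matprod N (As @ Bs)) (matmul N (matprod N As) (matprod N Bs))"
proof (induction As)
  case Nil
  then show ?case by (simp add: eq_on_basis_def matmul_idm_left)
next
  case (Cons A As)
  then show ?case
    by (simp add: eq_on_basis_def matmul_assoc matmul_cong_right[OF Cons.IH])
qed

lemma circuit_op_eq_layer_op_concat:
  "eq_on_basis N (foldr (\<lambda>L A. matmul N (layer_op N L) A) Ls idm) (layer_op N (concat Ls))"
proof (induction Ls)
  case Nil
  then show ?case by (simp add: eq_on_basis_def layer_op_def)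
next
  case (Cons L Ls)
  show ?case
    unfolding eq_on_basis_def
  proof (intro ballI)
    fix x y assume "x \<in> basis N" and y: "y \<in> basis N"
    have "foldr (\<lambda>L A. matmul N (layer_op N L) A) (L # Ls) idm x y
        = matmul N (layer_op N L) (foldr (\<lambda>L A. matmul N (layer_op N L) A) Ls idm) x y"
      by simp
    also have "\<dots> = matmul N (layer_op N L) (layer_op N (concat Ls)) x y"
      by (rule matmul_cong_right[OF Cons.IH y])
    also have "\<dots> = layer_op N (concat (L # Ls)) x y"
      using matprod_append[of N "map gate_mat L" "map gate_mat (concat Ls)"] \<open>x \<in> basis N\<close> y
      by (simp add: layer_op_eq_matprod eq_on_basis_def)
    finally show "foldr (\<lambda>L A. matmul N (layer_op N L) A) (L # Ls) idm x y = layer_op N (concat (L # Ls)) x y" .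
  qed
qed

definition entry_bound :: "nat \<Rightarrow> real \<Rightarrow> qop \<Rightarrow> bool" where
  "entry_bound N b A \<longleftrightarrow> (\<forall>x\<in>basis N. \<forall>y\<in>basis N. cmod (A x y) \<le> b)"

lemma entry_bound_add:
  "entry_bound N a A \<Longrightarrow> entry_bound N b B \<Longrightarrow> entry_bound N (a + b) (A + B)"
  unfolding entry_bound_def by (auto simp: plus_fun_def intro!: norm_triangle_le add_mono)

lemma entry_bound_matmul:
  assumes A: "entry_bound N a A" and B: "entry_bound N b B"
  shows "entry_bound N (2 ^ N * a * b) (matmul N A B)"
  unfolding entry_bound_def
proof (intro ballI)
  fix x y assume x: "x \<in> basis N" and y: "y \<in> basis N"
  have "cmod (matmul N A B x y) \<le> (\<Sum>z\<in>basis N. cmod (A x z) * cmod (B z y))"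
    unfolding matmul_def by (rule norm_sum[THEN order_trans]) (simp add: norm_mult)
  also have "\<dots> \<le> (\<Sum>z\<in>basis N. a * b)"
  proof (rule sum_mono)
    fix z assume z: "z \<in> basis N"
    then have "cmod (A x z) \<le> a" "cmod (B z y) \<le> b"
      using A B x y by (auto simp: entry_bound_def)
    then show "cmod (A x z) * cmod (B z y) \<le> a * b"
      by (intro mult_mono) (auto intro: order_trans[OF norm_ge_zero])
  qed
  finally show "cmod (matmul N A B x y) \<le> 2 ^ N * a * b"
    by (simp add: card_basis)
qed

lemma entry_bound_matprod:
  assumes "\<forall>A\<in>set As. entry_bound N b A" "1 \<le> b"
  shows "entry_bound N ((2 ^ N * b) ^ length As) (matprod N As)"
  using assms(1)
proof (induction As)
  case Nil
  then show ?case by (simp add: entry_bound_def idm_def)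
next
  case (Cons A As)
  then show ?case
    using entry_bound_matmul[of N b A "(2 ^ N * b) ^ length As" "matprod N As"]
    by (simp add: mult.assoc)
qed

lemma entry_bound_mono: "entry_bound N a A \<Longrightarrow> a \<le> b \<Longrightarrow> entry_bound N b A"
  unfolding entry_bound_def by force

lemma entry_bound_eq_on_basis:
  "entry_bound N e (A - B) \<Longrightarrow> eq_on_basis N B B' \<Longrightarrow> entry_bound N e (A - B')"
  by (simp add: entry_bound_def eq_on_basis_def)

lemma entry_bound_matprod_diff:
  assumes "list_all2 (\<lambda>A B. entry_bound N b A \<and> entry_bound N b B \<and> entry_bound N \<delta> (A - B)) As Bs"
    and "1 \<le> b" "0 \<le> \<delta>"
  shows "entry_bound N (real (length As) * (2 ^ N * b) ^ length As * \<delta>) (matprod N As - matprod N Bs)"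
  using assms(1)
proof (induction rule: list_all2_induct)
  case Nil
  then show ?case by (simp add: entry_bound_def)
next
  case (Cons A As B Bs)
  define k where "k = length As"
  define D :: real where "D = 2 ^ N * b"
  have "\<forall>A'\<in>set As. entry_bound N b A'"
    using Cons.hyps(2) by (auto simp: list_all2_conv_all_nth in_set_conv_nth)
  then have "entry_bound N (D ^ k) (matprod N As)"
    unfolding D_def k_def using assms(2) by (rule entry_bound_matprod)
  then have "entry_bound N (2 ^ N * \<delta> * D ^ k) (matmul N (A - B) (matprod N As))"
    using Cons.hyps(1) by (intro entry_bound_matmul) auto
  moreover have "entry_bound N (2 ^ N * b * (k * D ^ k * \<delta>)) (matmul N B (matprod N As - matprod N Bs))"
    using entry_bound_matmul[OF _ Cons.IH, of b B] Cons.hyps(1) unfolding D_def k_def by blast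
  ultimately have bound: "entry_bound N (2 ^ N * \<delta> * D ^ k + 2 ^ N * b * (k * D ^ k * \<delta>))
      (matmul N (A - B) (matprod N As) + matmul N B (matprod N As - matprod N Bs))"
    by (rule entry_bound_add)
  have "2 ^ N * \<delta> * D ^ k + 2 ^ N * b * (k * D ^ k * \<delta>) = 2 ^ N * \<delta> * D ^ k * (1 + b * k)"
    by (simp add: algebra_simps)
  also have "\<dots> \<le> 2 ^ N * \<delta> * D ^ k * (b * (1 + k))"
    using assms(2,3) by (intro mult_left_mono) (auto simp: D_def algebra_simps)
  also have "\<dots> = real (length (A # As)) * D ^ length (A # As) * \<delta>"
    by (simp add: D_def k_def algebra_simps)
  finally have le: "2 ^ N * \<delta> * D ^ k + 2 ^ N * b * (k * D ^ k * \<delta>)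
      \<le> real (length (A # As)) * D ^ length (A # As) * \<delta>" .
  have "matprod N (A # As) - matprod N (B # Bs)
      = matmul N (A - B) (matprod N As) + matmul N B (matprod N As - matprod N Bs)"
    by (simp add: matmul_diff_left matmul_diff_right)
  with entry_bound_mono[OF bound le] show ?case
    by (simp only: D_def)
qed

section \<open>CNOT-diagonal circuits as reversible maps with phases\<close>

fun cgate_step :: "cgate \<Rightarrow> bits \<times> real \<Rightarrow> bits \<times> real" where
  "cgate_step (CNOT a b) (z, \<phi>) = (z(b := (z a \<noteq> z b)), \<phi>)"
| "cgate_step (Diag i \<alpha> \<beta>) (z, \<phi>) = (z, \<phi> + (if z i then \<beta> else \<alpha>))"

definition cgate_run :: "cgate list \<Rightarrow> bits \<times> real \<Rightarrow> bits \<times> real" where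
  "cgate_run gs s = foldr cgate_step gs s"

lemma cgate_run_Nil [simp]: "cgate_run [] s = s"
  and cgate_run_Cons [simp]: "cgate_run (g # gs) s = cgate_step g (cgate_run gs s)"
  and cgate_run_append: "cgate_run (gs @ hs) s = cgate_run gs (cgate_run hs s)"
  by (simp_all add: cgate_run_def)

lemma cgate_step_basis:
  "cgate_ok n g \<Longrightarrow> fst s \<in> basis n \<Longrightarrow> fst (cgate_step g s) \<in> basis n"
  by (cases g; cases s) (auto simp: basis_on_def)

lemma cgate_run_basis:
  "cnot_diag_circuit n gs \<Longrightarrow> fst s \<in> basis n \<Longrightarrow> fst (cgate_run gs s) \<in> basis n"
  unfolding cnot_diag_circuit_def by (induction gs) (auto intro: cgate_step_basis)

lemma cgate_mat_eq_step:
  "cgate_mat g x z = (if x = fst (cgate_step g (z, \<phi>))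
     then exp (\<i> * of_real (snd (cgate_step g (z, \<phi>)) - \<phi>)) else 0)"
proof (cases g)
  case (CNOT a b)
  have "((\<forall>k. k \<noteq> b \<longrightarrow> x k = z k) \<and> x b = (z a \<noteq> z b)) \<longleftrightarrow> x = z(b := (z a \<noteq> z b))"
    by (auto simp: fun_eq_iff)
  then show ?thesis using CNOT by simp
qed auto

lemma cop_eq_run:
  assumes "cnot_diag_circuit n gs" "y \<in> basis n"
  shows "cop n gs x y = (if x = fst (cgate_run gs (y, 0))
    then exp (\<i> * of_real (snd (cgate_run gs (y, 0)))) else 0)"
  using assms(1)
proof (induction gs arbitrary: x)
  case Nil
  then show ?case by (simp add: cop_def idm_def)
next
  case (Cons g gs)
  have ok: "cnot_diag_circuit n gs" using Cons.prems by (simp add: cnot_diag_circuit_def)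
  obtain z \<phi> where s: "cgate_run gs (y, 0) = (z, \<phi>)" by fastforce
  have z: "z \<in> basis n" using cgate_run_basis[OF ok, of "(y, 0)"] assms(2) s by simp
  have "cop n (g # gs) x y = (\<Sum>w\<in>basis n. cgate_mat g x w * cop n gs w y)"
    by (simp add: cop_def matmul_def)
  also have "\<dots> = cgate_mat g x z * exp (\<i> * of_real \<phi>)"
    using Cons.IH[OF ok] z by (simp add: s if_distrib[of "\<lambda>t. _ * t"] finite_basis cong: if_cong)
  also have "\<dots> = (if x = fst (cgate_step g (z, \<phi>))
      then exp (\<i> * of_real (snd (cgate_step g (z, \<phi>)))) else 0)"
    by (simp add: cgate_mat_eq_step[of g x z \<phi>] exp_add[symmetric] algebra_simps)
  finally show ?case by (simp add: s)
qed

section \<open>Phase circuits\<close>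

fun parity :: "bits \<Rightarrow> nat list \<Rightarrow> bool" where
  "parity y [] = False"
| "parity y (k # ks) = (y k \<noteq> parity y ks)"

lemma parity_upd: "t \<notin> set ks \<Longrightarrow> parity (z(t := v)) ks = parity z ks"
  by (induction ks) auto

lemma cgate_run_cnots:
  "t \<notin> set cs \<Longrightarrow>
    cgate_run (map (\<lambda>s. CNOT s t) cs) (z, \<phi>) = (z(t := (z t \<noteq> parity z cs)), \<phi>)"
  by (induction cs) (auto simp: fun_eq_iff)

lemma bit_imp_less: "bit (j::nat) k \<Longrightarrow> j < 2 ^ n \<Longrightarrow> k < n"
  by (metis bit_take_bit_iff take_bit_nat_eq_self)

lemma ex_bit: "(j::nat) \<noteq> 0 \<Longrightarrow> \<exists>k. bit j k"
  using bit_eqI[of j 0] by auto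

definition bit_positions :: "nat \<Rightarrow> nat \<Rightarrow> nat list" where
  "bit_positions n j = filter (bit j) [0..<n]"

lemma bit_positions_ne: "0 < j \<Longrightarrow> j < 2 ^ n \<Longrightarrow> bit_positions n j \<noteq> []"
  using ex_bit[of j] bit_imp_less[of j _ n] by (auto simp: bit_positions_def filter_empty_conv)

(* With t the lowest set bit of j, the CNOTs replace y_t by the parity of y on the bits of j,
   the diagonal gate applies the phase, and the CNOTs are undone. *)
definition phase_block :: "nat \<Rightarrow> nat \<Rightarrow> real \<Rightarrow> cgate list" where
  "phase_block n j c = (let t = hd (bit_positions n j); L = map (\<lambda>s. CNOT s t) (tl (bit_positions n j))
     in L @ [Diag t 0 c] @ L)"

lemma
  assumes "0 < j" "j < 2 ^ n"
  shows phase_block_ok: "cnot_diag_circuit n (phase_block n j c)"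
    and cgate_run_phase_block: "cgate_run (phase_block n j c) (y, \<phi>)
      = (y, \<phi> + (if parity y (bit_positions n j) then c else 0))"
proof -
  obtain t cs where tcs: "bit_positions n j = t # cs"
    using bit_positions_ne[OF assms] by (cases "bit_positions n j") auto
  have "distinct (t # cs)" "set (t # cs) \<subseteq> {..<n}"
    unfolding tcs[symmetric] by (auto simp: bit_positions_def)
  then have t: "t \<notin> set cs" "t < n" and cs: "\<forall>s\<in>set cs. s < n"
    by auto
  define L where "L = map (\<lambda>s. CNOT s t) cs"
  have block: "phase_block n j c = L @ [Diag t 0 c] @ L"
    by (simp add: phase_block_def tcs L_def Let_def)
  then show "cnot_diag_circuit n (phase_block n j c)"
    using t cs by (auto simp: cnot_diag_circuit_def L_def)
  define y' where "y' = y(t := (y t \<noteq> parity y cs))"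
  define \<psi> where "\<psi> = \<phi> + (if parity y (bit_positions n j) then c else 0)"
  have "cgate_run (phase_block n j c) (y, \<phi>) = cgate_run L (cgate_step (Diag t 0 c) (cgate_run L (y, \<phi>)))"
    by (simp add: block cgate_run_append)
  also have "cgate_run L (y, \<phi>) = (y', \<phi>)"
    unfolding L_def y'_def by (rule cgate_run_cnots[OF t(1)])
  also have "cgate_step (Diag t 0 c) (y', \<phi>) = (y', \<psi>)"
    by (simp add: y'_def \<psi>_def tcs)
  also have "cgate_run L (y', \<psi>) = (y, \<psi>)"
    using parity_upd[OF t(1)] unfolding L_def cgate_run_cnots[OF t(1)] by (auto simp: y'_def fun_eq_iff)
  finally show "cgate_run (phase_block n j c) (y, \<phi>)
      = (y, \<phi> + (if parity y (bit_positions n j) then c else 0))"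
    by (simp add: \<psi>_def)
qed

definition phase_circuit :: "nat \<Rightarrow> (nat \<Rightarrow> real) \<Rightarrow> cgate list" where
  "phase_circuit n c = concat (map (\<lambda>j. phase_block n j (c j)) [1..<2 ^ n])"

definition phase_poly :: "nat \<Rightarrow> (nat \<Rightarrow> real) \<Rightarrow> bits \<Rightarrow> real" where
  "phase_poly n c y = (\<Sum>j\<in>{1..<2 ^ n}. if parity y (bit_positions n j) then c j else 0)"

lemma phase_circuit_ok: "cnot_diag_circuit n (phase_circuit n c)"
proof -
  have "cgate_ok n g" if "j \<in> set [1..<2 ^ n]" "g \<in> set (phase_block n j (c j))" for j g
    using that phase_block_ok[of j n "c j"] by (simp add: cnot_diag_circuit_def)
  then show ?thesis
    by (auto simp: phase_circuit_def cnot_diag_circuit_def)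
qed

lemma cgate_run_phase_circuit: "cgate_run (phase_circuit n c) (y, 0) = (y, phase_poly n c y)"
proof -
  have "cgate_run (concat (map (\<lambda>j. phase_block n j (c j)) js)) (y, \<phi>)
      = (y, \<phi> + (\<Sum>j\<leftarrow>js. if parity y (bit_positions n j) then c j else 0))"
    if "set js \<subseteq> {1..<2 ^ n}" for js \<phi>
    using that by (induction js arbitrary: \<phi>) (auto simp: cgate_run_append cgate_run_phase_block)
  then show ?thesis
    by (simp add: phase_circuit_def phase_poly_def flip: sum_set_upt_conv_sum_list_nat)
qed

lemma cop_phase_circuit_diag:
  "y \<in> basis n \<Longrightarrow> cop n (phase_circuit n c) y y = exp (\<i> * of_real (phase_poly n c y))"
  using cop_eq_run[OF phase_circuit_ok] by (simp add: cgate_run_phase_circuit)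

section \<open>Recovering the coefficients from the phases\<close>

lemma prod_list_sign_eq_parity:
  "(\<Prod>k\<leftarrow>ks. if u k \<and> y k then -1 else 1) = (if parity y (filter u ks) then -1 else (1::real))"
  by (induction ks) auto

lemma walsh_eq_parity: "walsh n u y = (if parity y (filter u [0..<n]) then -1 else 1)"
proof -
  have "walsh n u y = (\<Prod>k\<leftarrow>[0..<n]. if u k \<and> y k then -1 else 1)"
    using prod.distinct_set_conv_list[of "[0..<n]"] by (simp add: walsh_def atLeast0LessThan)
  then show ?thesis
    by (simp add: prod_list_sign_eq_parity)
qed

lemma phase_poly_eq_walsh:
  "phase_poly n c y = (\<Sum>j\<in>{1..<2 ^ n}. c j * (1 - walsh n (bit j) y) / 2)"
  unfolding phase_poly_def by (intro sum.cong) (auto simp: walsh_eq_parity bit_positions_def)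

lemma sum_walsh_bit: "0 < (j::nat) \<Longrightarrow> j < 2 ^ n \<Longrightarrow> (\<Sum>y\<in>basis n. walsh n (bit j) y) = 0"
  using ex_bit[of j] bit_imp_less[of j _ n] by (auto simp: sum_walsh)

lemma sum_walsh_bit_mult:
  fixes i j :: nat
  assumes "i < 2 ^ n" "j < 2 ^ n"
  shows "(\<Sum>y\<in>basis n. walsh n (bit j) y * walsh n (bit i) y) = (if i = j then 2 ^ n else 0)"
proof -
  have "(\<forall>k<n. bit j k = bit i k) \<longleftrightarrow> i = j"
    using bit_imp_less[OF _ assms(1)] bit_imp_less[OF _ assms(2)] by (auto intro: bit_eqI)
  then show ?thesis by (simp add: walsh_mult sum_walsh)
qed

lemma walsh_transform_phase_poly:
  assumes j: "j \<in> {1..<2 ^ n}"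
  shows "(\<Sum>y\<in>basis n. walsh n (bit j) y * phase_poly n c y) = - (2 ^ n / 2) * c j"
proof -
  have "(\<Sum>y\<in>basis n. walsh n (bit j) y * phase_poly n c y)
      = (\<Sum>i\<in>{1..<2 ^ n}. c i / 2 * ((\<Sum>y\<in>basis n. walsh n (bit j) y)
          - (\<Sum>y\<in>basis n. walsh n (bit j) y * walsh n (bit i) y)))"
  proof -
    have "(\<Sum>y\<in>basis n. walsh n (bit j) y * phase_poly n c y)
        = (\<Sum>y\<in>basis n. \<Sum>i\<in>{1..<2 ^ n}. c i / 2 * (walsh n (bit j) y - walsh n (bit j) y * walsh n (bit i) y))"
      unfolding phase_poly_eq_walsh sum_distrib_left by (intro sum.cong refl) (simp add: field_simps)
    then show ?thesis
      by (subst (asm) sum.swap) (simp only: sum_distrib_left[symmetric] sum_subtractf)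
  qed
  also have "\<dots> = (\<Sum>i\<in>{1..<2 ^ n}. if i = j then - (2 ^ n / 2) * c j else 0)"
    using j by (intro sum.cong) (auto simp: sum_walsh_bit sum_walsh_bit_mult)
  also have "\<dots> = - (2 ^ n / 2) * c j"
    using j by simp
  finally show ?thesis .
qed

lemma coeff_diff_le_phase_poly_diff:
  assumes "\<forall>y\<in>basis n. \<bar>phase_poly n c y - phase_poly n c' y\<bar> \<le> \<delta>" "j \<in> {1..<2 ^ n}"
  shows "\<bar>c j - c' j\<bar> \<le> 2 * \<delta>"
proof -
  have "(\<Sum>y\<in>basis n. walsh n (bit j) y * (phase_poly n c y - phase_poly n c' y))
      = - (2 ^ n / 2) * (c j - c' j)"
    unfolding right_diff_distrib sum_subtractf walsh_transform_phase_poly[OF assms(2)] by simp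
  then have "2 ^ n / 2 * \<bar>c j - c' j\<bar>
      = \<bar>\<Sum>y\<in>basis n. walsh n (bit j) y * (phase_poly n c y - phase_poly n c' y)\<bar>"
    by (simp add: abs_mult)
  also have "\<dots> \<le> (\<Sum>y\<in>basis n. \<bar>walsh n (bit j) y * (phase_poly n c y - phase_poly n c' y)\<bar>)"
    by (rule sum_abs)
  also have "\<dots> \<le> (\<Sum>y\<in>basis n. \<delta>)"
    using assms(1) by (intro sum_mono) (simp add: abs_mult abs_walsh)
  also have "\<dots> = 2 ^ n / 2 * (2 * \<delta>)"
    by (simp add: card_basis)
  finally show ?thesis by simp
qed

lemma sin_diff_ge:
  fixes u v :: real
  assumes "0 \<le> v" "v < u" "u \<le> 1/2"
  shows "(u - v) / 2 \<le> sin u - sin v"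
proof -
  obtain z where z: "v < z" "z < u" "sin u - sin v = (u - v) * cos z"
    using MVT2[OF assms(2), of sin cos] by (auto intro: DERIV_sin)
  have "cos (pi / 3) \<le> cos z"
    by (rule cos_monotone_0_pi_le) (use z assms pi_ge_two in auto)
  then have "(u - v) * (1/2) \<le> (u - v) * cos z"
    using assms by (intro mult_left_mono) (auto simp: cos_60)
  then show ?thesis using z by simp
qed

lemma abs_diff_le_cis_dist:
  fixes u v :: real
  assumes "0 \<le> u" "u \<le> 1/2" "0 \<le> v" "v \<le> 1/2"
  shows "\<bar>u - v\<bar> \<le> 2 * cmod (exp (\<i> * of_real u) - exp (\<i> * of_real v))"
proof -
  have "\<bar>u - v\<bar> \<le> 2 * \<bar>sin u - sin v\<bar>"
    using sin_diff_ge[of v u] sin_diff_ge[of u v] assms by (cases u v rule: linorder_cases) auto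
  also have "\<bar>sin u - sin v\<bar> = \<bar>Im (exp (\<i> * of_real u) - exp (\<i> * of_real v))\<bar>"
    by (simp add: Im_exp)
  also have "\<dots> \<le> cmod (exp (\<i> * of_real u) - exp (\<i> * of_real v))"
    by (rule abs_Im_le_cmod)
  finally show ?thesis by simp
qed

section \<open>Rounding circuits to a grid\<close>

lemma unitary_on_entry_le:
  assumes "unitary_on B U" "x \<in> B" "y \<in> B" "finite B"
  shows "cmod (U x y) \<le> 1"
proof -
  have "cnj w * w = of_real ((cmod w)\<^sup>2)" for w
    by (metis complex_mult_cnj cmod_power2 mult.commute)
  then have "complex_of_real (\<Sum>z\<in>B. (cmod (U z y))\<^sup>2) = (\<Sum>z\<in>B. cnj (U z y) * U z y)"
    by (simp only: of_real_sum)
  also have "\<dots> = 1"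
    using assms(1,3) by (auto simp: unitary_on_def)
  finally have "(\<Sum>z\<in>B. (cmod (U z y))\<^sup>2) = 1"
    using of_real_eq_1_iff by blast
  moreover have "(cmod (U x y))\<^sup>2 \<le> (\<Sum>z\<in>B. (cmod (U z y))\<^sup>2)"
    using assms(2,4) by (intro member_le_sum) auto
  ultimately have "(cmod (U x y))\<^sup>2 \<le> 1\<^sup>2"
    by simp
  then show ?thesis
    by (rule power2_le_imp_le) simp
qed

lemma valid_gate_finite: "valid_gate N (S, U) \<Longrightarrow> finite S"
  unfolding valid_gate_def by (auto dest: finite_subset[OF _ finite_lessThan])

lemma restr_in_basis_on: "restr S x \<in> basis_on S"
  by (simp add: restr_def basis_on_def)

lemma gate_mat_Pair:
  "gate_mat (S, U) x y = (if \<forall>k. k \<notin> S \<longrightarrow> x k = y k then U (restr S x) (restr S y) else 0)"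
  by (simp add: gate_mat_def)

lemma norm_gate_mat_le:
  assumes "valid_gate N g"
  shows "cmod (gate_mat g x y) \<le> 1"
proof -
  obtain S U where g: "g = (S, U)" by (cases g)
  have "unitary_on (basis_on S) U"
    using assms by (simp add: valid_gate_def g)
  moreover have "finite S"
    using assms valid_gate_finite by (simp add: g)
  ultimately have "cmod (U (restr S x) (restr S y)) \<le> 1"
    using unitary_on_entry_le restr_in_basis_on finite_basis_on by blast
  then show ?thesis by (simp add: g gate_mat_Pair)
qed

definition round_grid :: "nat \<Rightarrow> complex \<Rightarrow> complex" where
  "round_grid R z = Complex (of_int (round (R * Re z)) / R) (of_int (round (R * Im z)) / R)"

definition grid :: "nat \<Rightarrow> complex set" where
  "grid R = (\<lambda>(a, b). Complex (of_int a / R) (of_int b / R)) ` ({- int R..int R} \<times> {- int R..int R})"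

lemma norm_round_grid_diff_le:
  assumes "R > 0"
  shows "cmod (round_grid R z - z) \<le> 1 / R"
proof -
  have round_err: "\<bar>of_int (round (R * t)) / R - t\<bar> \<le> 1 / (2 * R)" for t :: real
  proof -
    have "\<bar>of_int (round (R * t)) / R - t\<bar> = \<bar>of_int (round (R * t)) - R * t\<bar> / R"
      using assms by (simp add: field_simps)
    also have "\<dots> \<le> (1 / 2) / R"
      using assms of_int_round_abs_le[of "R * t"] by (intro divide_right_mono) auto
    finally show ?thesis by simp
  qed
  have "cmod (round_grid R z - z) \<le> \<bar>Re (round_grid R z - z)\<bar> + \<bar>Im (round_grid R z - z)\<bar>"
    by (rule cmod_le)
  also have "\<dots> \<le> 1 / (2 * R) + 1 / (2 * R)"
    using round_err[of "Re z"] round_err[of "Im z"] by (auto simp: round_grid_def intro!: add_mono)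
  finally show ?thesis by simp
qed

lemma round_in_interval:
  assumes "\<bar>t\<bar> \<le> 1"
  shows "round (real R * t) \<in> {- int R..int R}"
proof -
  have "\<bar>real R * t\<bar> \<le> real R"
    using assms by (simp add: abs_mult mult_left_le)
  then have lower: "of_int (- int R) \<le> real R * t" and upper: "real R * t \<le> of_int (int R)"
    by auto
  have "round (of_int (- int R) :: real) \<le> round (real R * t)"
    using lower by (rule round_mono)
  moreover have "round (real R * t) \<le> round (of_int (int R) :: real)"
    using upper by (rule round_mono)
  ultimately show ?thesis
    unfolding round_of_int by simp
qed

lemma round_grid_in_grid: "cmod z \<le> 1 \<Longrightarrow> round_grid R z \<in> grid R"
  unfolding round_grid_def grid_def
  using round_in_interval[of "Re z" R] round_in_interval[of "Im z" R] abs_Re_le_cmod[of z] abs_Im_le_cmod[of z]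
  by (intro image_eqI[where x = "(round (R * Re z), round (R * Im z))"]) auto

lemma finite_grid: "finite (grid R)"
  by (simp add: grid_def)

lemma card_grid_le: "card (grid R) \<le> (2 * R + 1) ^ 2"
proof -
  have "card (grid R) \<le> card ({- int R..int R} \<times> {- int R..int R})"
    unfolding grid_def by (rule card_image_le) simp
  also have "\<dots> = (2 * R + 1) ^ 2"
  proof -
    have "card {- int R..int R} = 2 * R + 1"
      by (simp add: card_atLeastAtMost_int)
    then show ?thesis
      by (simp only: card_cartesian_product power2_eq_square)
  qed
  finally show ?thesis .
qed

definition round_gate :: "nat \<Rightarrow> nat set \<times> qop \<Rightarrow> nat set \<times> qop" where
  "round_gate R g = (fst g, \<lambda>x y. if x \<in> basis_on (fst g) \<and> y \<in> basis_on (fst g)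
     then round_grid R (snd g x y) else 0)"

lemma gate_mat_round_gate:
  "gate_mat (round_gate R (S, U)) x y = (if \<forall>k. k \<notin> S \<longrightarrow> x k = y k
     then round_grid R (U (restr S x) (restr S y)) else 0)"
  by (auto simp: round_gate_def gate_mat_Pair restr_in_basis_on)

lemma norm_gate_mat_round_gate_diff_le:
  "R > 0 \<Longrightarrow> cmod (gate_mat (round_gate R g) x y - gate_mat g x y) \<le> 1 / R"
  using norm_round_grid_diff_le by (cases g) (auto simp: gate_mat_round_gate gate_mat_Pair)

lemma norm_gate_mat_round_gate_le:
  assumes "valid_gate N g" "R > 0"
  shows "cmod (gate_mat (round_gate R g) x y) \<le> 2"
proof -
  have "cmod (gate_mat (round_gate R g) x y)
      \<le> cmod (gate_mat (round_gate R g) x y - gate_mat g x y) + cmod (gate_mat g x y)"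
    using norm_triangle_ineq[of "gate_mat (round_gate R g) x y - gate_mat g x y" "gate_mat g x y"] by simp
  also have "\<dots> \<le> 1 / R + 1"
    by (rule add_mono[OF norm_gate_mat_round_gate_diff_le[OF assms(2)] norm_gate_mat_le[OF assms(1)]])
  also have "\<dots> \<le> 2"
    using assms(2) by simp
  finally show ?thesis .
qed

definition grid_ops :: "nat \<Rightarrow> nat set \<Rightarrow> qop set" where
  "grid_ops R S = {V. \<forall>x y. V x y \<in> (if x \<in> basis_on S \<and> y \<in> basis_on S then grid R else {0})}"

lemma grid_opsD:
  "V \<in> grid_ops R S \<Longrightarrow> V x y \<in> (if x \<in> basis_on S \<and> y \<in> basis_on S then grid R else {0})"
  unfolding grid_ops_def by blast

lemma grid_ops_subset_image:
  "grid_ops R S \<subseteq> (\<lambda>F x y. if x \<in> basis_on S \<and> y \<in> basis_on S then F (x, y) else 0)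
     ` ((basis_on S \<times> basis_on S) \<rightarrow>\<^sub>E grid R)"
proof
  fix V assume V: "V \<in> grid_ops R S"
  let ?F = "restrict (case_prod V) (basis_on S \<times> basis_on S)"
  have entries: "V x y \<in> grid R" if "x \<in> basis_on S" "y \<in> basis_on S" for x y
    using grid_opsD[OF V, of x y] that by simp
  have "V = (\<lambda>x y. if x \<in> basis_on S \<and> y \<in> basis_on S then ?F (x, y) else 0)"
    using grid_opsD[OF V] by (fastforce simp: fun_eq_iff split: if_splits)
  moreover have "?F \<in> (basis_on S \<times> basis_on S) \<rightarrow>\<^sub>E grid R"
    using entries by (auto simp: restrict_PiE_iff)
  ultimately show "V \<in> (\<lambda>F x y. if x \<in> basis_on S \<and> y \<in> basis_on S then F (x, y) else 0)
      ` ((basis_on S \<times> basis_on S) \<rightarrow>\<^sub>E grid R)"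
    by (rule image_eqI)
qed

lemma card_grid_ops_le:
  assumes "finite S" "card S \<le> 2"
  shows "finite (grid_ops R S) \<and> card (grid_ops R S) \<le> (2 * R + 1) ^ 32"
proof -
  define B where "B = basis_on S"
  have B: "finite B" "card B \<le> 4"
    using assms card_basis_on_le[of S] power_increasing[of "card S" 2 "2::nat"]
    by (auto simp: B_def finite_basis_on)
  have fin: "finite ((B \<times> B) \<rightarrow>\<^sub>E grid R)"
    using B finite_grid by (simp add: finite_PiE)
  then have "finite (grid_ops R S)"
    using grid_ops_subset_image[of R S] by (auto simp: B_def intro: finite_subset)
  have "card (grid_ops R S) \<le> card ((B \<times> B) \<rightarrow>\<^sub>E grid R)"
    by (rule order_trans[OF card_mono[OF finite_imageI[OF fin] grid_ops_subset_image[of R S, folded B_def]]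
      card_image_le[OF fin]])
  also have "\<dots> = card (grid R) ^ (card B * card B)"
    using B by (simp add: card_funcsetE card_cartesian_product)
  also have "\<dots> \<le> ((2 * R + 1) ^ 2) ^ (card B * card B)"
    by (rule power_mono[OF card_grid_le]) simp
  also have "\<dots> \<le> ((2 * R + 1) ^ 2) ^ 16"
    using B mult_le_mono[of "card B" 4 "card B" 4] by (intro power_increasing) auto
  finally show ?thesis
    using \<open>finite (grid_ops R S)\<close> by (simp flip: power_mult)
qed

definition grid_gates :: "nat \<Rightarrow> nat \<Rightarrow> (nat set \<times> qop) set" where
  "grid_gates R N = (SIGMA S:{S. S \<subseteq> {..<N} \<and> card S \<le> 2}. grid_ops R S)"

lemma card_grid_gates_le:
  "finite (grid_gates R N) \<and> card (grid_gates R N) \<le> 2 ^ N * (2 * R + 1) ^ 32"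
proof -
  define A where "A = {S. S \<subseteq> {..<N} \<and> card S \<le> 2}"
  have "A \<subseteq> Pow {..<N}"
    by (auto simp: A_def)
  then have A: "finite A" "card A \<le> 2 ^ N"
    using card_mono[of "Pow {..<N}" A] by (auto intro: finite_subset simp: card_Pow)
  have ops: "finite (grid_ops R S)" "card (grid_ops R S) \<le> (2 * R + 1) ^ 32" if "S \<in> A" for S
    using that card_grid_ops_le[of S R] finite_subset[of S "{..<N}"] by (auto simp: A_def)
  have "card (grid_gates R N) = (\<Sum>S\<in>A. card (grid_ops R S))"
    unfolding grid_gates_def A_def[symmetric] using A(1) ops(1) by (simp add: card_SigmaI)
  also have "\<dots> \<le> card A * (2 * R + 1) ^ 32"
    using sum_mono[of A "\<lambda>S. card (grid_ops R S)" "\<lambda>_. (2 * R + 1) ^ 32"] ops(2) by simp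
  also have "\<dots> \<le> 2 ^ N * (2 * R + 1) ^ 32"
    using A(2) by simp
  finally show ?thesis
    unfolding grid_gates_def A_def[symmetric] using A(1) ops(1) by auto
qed

lemma round_gate_in_grid_gates:
  assumes "valid_gate N g"
  shows "round_gate R g \<in> grid_gates R N"
proof -
  obtain S U where g: "g = (S, U)" by (cases g)
  have S: "S \<subseteq> {..<N}" "card S \<le> 2" "unitary_on (basis_on S) U"
    using assms unfolding g valid_gate_def by simp_all
  have "finite S"
    using valid_gate_finite assms unfolding g by blast
  have "cmod (U x y) \<le> 1" if "x \<in> basis_on S" "y \<in> basis_on S" for x y
    using unitary_on_entry_le[OF S(3) that finite_basis_on[OF \<open>finite S\<close>]] .
  then have "(\<lambda>x y. if x \<in> basis_on S \<and> y \<in> basis_on S then round_grid R (U x y) else 0) \<in> grid_ops R S"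
    by (auto simp: grid_ops_def round_grid_in_grid)
  moreover have "round_gate R g
      = (S, \<lambda>x y. if x \<in> basis_on S \<and> y \<in> basis_on S then round_grid R (U x y) else 0)"
    unfolding round_gate_def g fst_conv snd_conv by (rule refl)
  ultimately show ?thesis
    using S by (simp add: grid_gates_def)
qed

definition grid_circuits :: "nat \<Rightarrow> nat \<Rightarrow> nat \<Rightarrow> (nat set \<times> qop) list set" where
  "grid_circuits R N L = {gs. set gs \<subseteq> grid_gates R N \<and> length gs \<le> L}"

lemma card_lists_length_le_bound:
  assumes "finite A" "card A \<le> c" "1 \<le> c"
  shows "card {xs. set xs \<subseteq> A \<and> length xs \<le> L} \<le> (L + 1) * c ^ L"
proof -
  have "card {xs. set xs \<subseteq> A \<and> length xs \<le> L} = (\<Sum>i\<le>L. card A ^ i)"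
    using assms(1) by (rule card_lists_length_le)
  also have "\<dots> \<le> (\<Sum>i\<le>L. c ^ L)"
    using assms(2,3) by (intro sum_mono order_trans[OF power_mono power_increasing]) auto
  finally show ?thesis by simp
qed

lemma card_grid_circuits_le:
  "finite (grid_circuits R N L) \<and> card (grid_circuits R N L) \<le> (L + 1) * (2 ^ N * (2 * R + 1) ^ 32) ^ L"
  using card_grid_gates_le[of R N] card_lists_length_le_bound[of "grid_gates R N" _ L]
    finite_lists_length_le[of "grid_gates R N" L]
  by (simp add: grid_circuits_def)

lemma length_le_of_layer_ok:
  assumes "layer_ok N gs"
  shows "length gs \<le> N"
proof -
  let ?first = "\<lambda>i. Min (fst (gs ! i))"
  have "fst (gs ! i) \<noteq> {}" "fst (gs ! i) \<subseteq> {..<N}" "finite (fst (gs ! i))"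
    if "i < length gs" for i
  proof -
    obtain S U where g: "gs ! i = (S, U)" by (cases "gs ! i")
    have "valid_gate N (gs ! i)"
      using that assms by (simp add: layer_ok_def)
    then have valid: "valid_gate N (S, U)"
      by (simp only: g)
    then show "fst (gs ! i) \<noteq> {}" "fst (gs ! i) \<subseteq> {..<N}"
      by (simp_all add: valid_gate_def g)
    show "finite (fst (gs ! i))"
      using valid_gate_finite[OF valid] by (simp add: g)
  qed
  then have first: "?first i \<in> fst (gs ! i) \<inter> {..<N}" if "i < length gs" for i
    using that Min_in by blast
  have inj: "inj_on ?first {..<length gs}"
  proof (rule inj_onI)
    fix i j assume i: "i \<in> {..<length gs}" and j: "j \<in> {..<length gs}" and eq: "?first i = ?first j"
    show "i = j"
    proof (rule ccontr)
      assume "i \<noteq> j"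
      then have "fst (gs ! i) \<inter> fst (gs ! j) = {}"
        using assms i j unfolding layer_ok_def by simp
      moreover have "?first i \<in> fst (gs ! i)" "?first j \<in> fst (gs ! j)"
        using first i j by auto
      ultimately show False
        using eq by auto
    qed
  qed
  have "?first ` {..<length gs} \<subseteq> {..<N}"
    using first by auto
  from card_inj_on_le[OF inj this] show ?thesis
    by simp
qed

definition approx_err :: "nat \<Rightarrow> nat \<Rightarrow> real" where
  "approx_err N L = real L * (2 ^ N * 2) ^ L"

lemma approx_err_mono:
  assumes "L \<le> L'"
  shows "approx_err N L \<le> approx_err N L'"
proof -
  have "(1::real) \<le> 2 ^ N * 2"
    using one_le_power[of "2::real" N] by linarith
  then show ?thesis
    using assms unfolding approx_err_def by (intro mult_mono power_increasing) auto
qed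

lemma round_gate_entry_bounds:
  assumes "valid_gate N g" "R > 0"
  shows "entry_bound N 2 (gate_mat (round_gate R g)) \<and> entry_bound N 2 (gate_mat g)
    \<and> entry_bound N (1 / R) (gate_mat (round_gate R g) - gate_mat g)"
proof -
  have "cmod (gate_mat g x y) \<le> 2" for x y
    using norm_gate_mat_le[OF assms(1), of x y] by simp
  then show ?thesis
    using norm_gate_mat_round_gate_le[OF assms] norm_gate_mat_round_gate_diff_le[OF assms(2)]
    by (simp add: entry_bound_def)
qed

lemma length_concat_layers_le:
  assumes "\<forall>L\<in>set Ls. layer_ok N L"
  shows "length (concat Ls) \<le> length Ls * N"
proof -
  have "length (concat Ls) = (\<Sum>L\<leftarrow>Ls. length L)"
    by (simp add: length_concat)
  also have "\<dots> \<le> (\<Sum>L\<leftarrow>Ls. N)"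
    using assms length_le_of_layer_ok by (intro sum_list_mono) blast
  finally show ?thesis
    by (simp add: sum_list_triv)
qed

lemma circuit_approx_by_grid_circuit:
  assumes "circuit_of_depth N d M" "R > 0"
  shows "\<exists>gs\<in>grid_circuits R N (d * N). entry_bound N (approx_err N (d * N) / R) (layer_op N gs - M)"
proof -
  obtain Ls where Ls: "length Ls = d" "\<forall>L\<in>set Ls. layer_ok N L"
    and M: "\<forall>x\<in>basis N. \<forall>y\<in>basis N. M x y = foldr (\<lambda>L A. matmul N (layer_op N L) A) Ls idm x y"
    using assms(1) by (auto simp: circuit_of_depth_def)
  define gs where "gs = concat Ls"
  define rs where "rs = map (round_gate R) gs"
  have valid: "\<forall>g\<in>set gs. valid_gate N g"
    using Ls(2) by (auto simp: gs_def layer_ok_def)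
  have len: "length gs \<le> d * N"
    using length_concat_layers_le[OF Ls(2)] Ls(1) by (simp add: gs_def)
  then have "rs \<in> grid_circuits R N (d * N)"
    using valid round_gate_in_grid_gates by (auto simp: grid_circuits_def rs_def)
  moreover have "list_all2 (\<lambda>A B. entry_bound N 2 A \<and> entry_bound N 2 B \<and> entry_bound N (1 / R) (A - B))
      (map gate_mat rs) (map gate_mat gs)"
    using valid round_gate_entry_bounds[OF _ assms(2)]
    by (simp add: rs_def list_all2_map1 list_all2_map2 list_all2_same)
  then have "entry_bound N (real (length (map gate_mat rs)) * (2 ^ N * 2) ^ length (map gate_mat rs) * (1 / R))
      (matprod N (map gate_mat rs) - matprod N (map gate_mat gs))"
    by (rule entry_bound_matprod_diff) simp_all
  then have "entry_bound N (approx_err N (length gs) / R) (layer_op N rs - layer_op N gs)"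
    by (simp add: layer_op_eq_matprod rs_def approx_err_def)
  then have "entry_bound N (approx_err N (d * N) / R) (layer_op N rs - layer_op N gs)"
    using approx_err_mono[OF len, of N] assms(2) by (elim entry_bound_mono) (simp add: divide_right_mono)
  moreover have "eq_on_basis N (layer_op N gs) M"
    using circuit_op_eq_layer_op_concat[of N Ls] M by (simp add: eq_on_basis_def gs_def)
  ultimately show ?thesis
    using entry_bound_eq_on_basis by blast
qed

section \<open>Counting choices of phases\<close>

definition coeff_choices :: "nat \<Rightarrow> nat \<Rightarrow> (nat \<Rightarrow> nat) set" where
  "coeff_choices n R = {1..<2 ^ n} \<rightarrow>\<^sub>E {1..R}"

(* The scaling keeps phase_poly in [0, 1/2], where abs_diff_le_cis_dist applies. *)
definition phase_coeffs :: "nat \<Rightarrow> nat \<Rightarrow> (nat \<Rightarrow> nat) \<Rightarrow> nat \<Rightarrow> real" where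
  "phase_coeffs n R a j = real (a j) / (real R * 2 ^ (n + 1))"

lemma card_coeff_choices: "card (coeff_choices n R) = R ^ (2 ^ n - 1)"
  by (simp add: coeff_choices_def card_PiE)

lemma phase_coeffs_range:
  assumes "a \<in> coeff_choices n R" "R > 0" "j \<in> {1..<2 ^ n}"
  shows "0 \<le> phase_coeffs n R a j \<and> phase_coeffs n R a j \<le> 1 / 2 ^ (n + 1)"
proof -
  have "a j \<le> R"
    using assms(1,3) by (auto simp: coeff_choices_def PiE_iff)
  then have "real (a j) / (real R * 2 ^ (n + 1)) \<le> real R / (real R * 2 ^ (n + 1))"
    by (intro divide_right_mono) auto
  then show ?thesis
    using assms(2) by (simp add: phase_coeffs_def)
qed

lemma phase_poly_phase_coeffs_range:
  assumes "a \<in> coeff_choices n R" "R > 0"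
  shows "0 \<le> phase_poly n (phase_coeffs n R a) y \<and> phase_poly n (phase_coeffs n R a) y \<le> 1 / 2"
proof
  show "0 \<le> phase_poly n (phase_coeffs n R a) y"
    unfolding phase_poly_def using phase_coeffs_range[OF assms] by (intro sum_nonneg) auto
  have "phase_poly n (phase_coeffs n R a) y \<le> (\<Sum>j\<in>{1..<(2::nat) ^ n}. 1 / (2::real) ^ (n + 1))"
    unfolding phase_poly_def using phase_coeffs_range[OF assms] by (intro sum_mono) auto
  also have "\<dots> \<le> 2 ^ n / 2 ^ (n + 1)"
    by (simp add: divide_right_mono)
  finally show "phase_poly n (phase_coeffs n R a) y \<le> 1 / 2"
    by simp
qed

definition near_choices :: "nat \<Rightarrow> nat \<Rightarrow> real \<Rightarrow> qop \<Rightarrow> (nat \<Rightarrow> nat) set" where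
  "near_choices n R \<epsilon> P = {a \<in> coeff_choices n R.
     \<forall>y\<in>basis n. cmod (P y y - exp (\<i> * of_real (phase_poly n (phase_coeffs n R a) y))) \<le> \<epsilon>}"

lemma near_choices_coord_close:
  assumes a: "a \<in> near_choices n R \<epsilon> P" and b: "b \<in> near_choices n R \<epsilon> P"
    and R: "R > 0" and j: "j \<in> {1..<2 ^ n}"
  shows "\<bar>real (a j) - real (b j)\<bar> \<le> 8 * \<epsilon> * R * 2 ^ (n + 1)"
proof -
  have "\<bar>phase_poly n (phase_coeffs n R a) y - phase_poly n (phase_coeffs n R b) y\<bar> \<le> 4 * \<epsilon>"
    if y: "y \<in> basis n" for y
  proof -
    let ?u = "phase_poly n (phase_coeffs n R a) y" and ?v = "phase_poly n (phase_coeffs n R b) y"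
    have "cmod (exp (\<i> * of_real ?u) - exp (\<i> * of_real ?v))
        \<le> cmod (P y y - exp (\<i> * of_real ?u)) + cmod (P y y - exp (\<i> * of_real ?v))"
      by (rule norm_diff_triangle_le[OF _ order_refl]) (simp add: norm_minus_commute)
    also have "\<dots> \<le> \<epsilon> + \<epsilon>"
      using a b y unfolding near_choices_def by (intro add_mono) auto
    finally show ?thesis
      using abs_diff_le_cis_dist[of ?u ?v] phase_poly_phase_coeffs_range[OF _ R] a b
      by (auto simp: near_choices_def)
  qed
  then have "\<bar>phase_coeffs n R a j - phase_coeffs n R b j\<bar> \<le> 8 * \<epsilon>"
    using coeff_diff_le_phase_poly_diff[OF _ j] by fastforce
  moreover have "phase_coeffs n R a j - phase_coeffs n R b j = (real (a j) - real (b j)) / (real R * 2 ^ (n + 1))"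
    by (simp add: phase_coeffs_def diff_divide_distrib)
  ultimately show ?thesis
    using R by (simp add: abs_divide pos_divide_le_eq mult.assoc)
qed

lemma card_PiE_le_of_coord_close:
  fixes A :: "('a \<Rightarrow> nat) set"
  assumes "finite I" "A \<subseteq> I \<rightarrow>\<^sub>E B" "\<forall>a\<in>A. \<forall>b\<in>A. \<forall>j\<in>I. a j \<le> b j + W"
  shows "card A \<le> (2 * W + 1) ^ card I"
proof (cases "A = {}")
  case False
  then obtain b where b: "b \<in> A" by blast
  have "A \<subseteq> PiE I (\<lambda>j. {b j - W..b j + W})"
  proof
    fix a assume a: "a \<in> A"
    show "a \<in> PiE I (\<lambda>j. {b j - W..b j + W})"
    proof (rule PiE_I)
      fix j assume "j \<in> I"
      then have "a j \<le> b j + W" "b j \<le> a j + W"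
        using assms(3) a b by blast+
      then show "a j \<in> {b j - W..b j + W}"
        by simp
    next
      fix j assume "j \<notin> I"
      then show "a j = undefined"
        using a assms(2) by (blast intro: PiE_arb)
    qed
  qed
  then have "card A \<le> card (PiE I (\<lambda>j. {b j - W..b j + W}))"
    using assms(1) by (intro card_mono) (simp_all add: finite_PiE)
  also have "\<dots> = (\<Prod>j\<in>I. card {b j - W..b j + W})"
    using assms(1) by (rule card_PiE)
  also have "\<dots> \<le> (\<Prod>j\<in>I. 2 * W + 1)"
    by (intro prod_mono) auto
  finally show ?thesis by simp
qed simp

definition near_count :: "nat \<Rightarrow> real \<Rightarrow> nat" where
  "near_count n K = (2 * nat \<lceil>8 * K * 2 ^ (n + 1)\<rceil> + 1) ^ (2 ^ n - 1)"

lemma card_near_choices_le: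
  assumes "R > 0"
  shows "card (near_choices n R (K / R) P) \<le> near_count n K"
proof -
  define W where "W = nat \<lceil>8 * K * 2 ^ (n + 1)\<rceil>"
  have "a j \<le> b j + W"
    if "a \<in> near_choices n R (K / R) P" "b \<in> near_choices n R (K / R) P" "j \<in> {1..<2 ^ n}"
    for a b j
  proof -
    have "\<bar>real (a j) - real (b j)\<bar> \<le> 8 * (K / R) * R * 2 ^ (n + 1)"
      using near_choices_coord_close[OF that(1,2) assms that(3)] .
    also have "\<dots> \<le> W"
      using assms by (simp add: W_def) linarith
    finally show ?thesis by linarith
  qed
  moreover have "near_choices n R (K / R) P \<subseteq> {1..<2 ^ n} \<rightarrow>\<^sub>E {1..R}"
    by (auto simp: near_choices_def coeff_choices_def)
  ultimately show ?thesis
    using card_PiE_le_of_coord_close[of "{1..<2 ^ n}" "near_choices n R (K / R) P"]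
    by (simp add: W_def near_count_def)
qed

(* Pairs (number of qubits, number of gates). The bound on L makes the about R^(32 L) grid
   circuits fewer than the R^(2^n - 1) choices of phases; the bound on N keeps the set finite. *)
definition small_sizes :: "nat \<Rightarrow> (nat \<times> nat) set" where
  "small_sizes n = {..2 ^ n} \<times> {L. 32 * L + 2 \<le> 2 ^ n}"

lemma finite_small_sizes: "finite (small_sizes n)"
proof -
  have "{L::nat. 32 * L + 2 \<le> 2 ^ n} \<subseteq> {..2 ^ n}"
    by auto
  then show ?thesis
    by (auto simp: small_sizes_def intro: finite_subset)
qed

definition bad_choices :: "nat \<Rightarrow> nat \<Rightarrow> (nat \<Rightarrow> nat) set" where
  "bad_choices n R = (\<Union>(N, L)\<in>small_sizes n. \<Union>gs\<in>grid_circuits R N L.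
     near_choices n R (approx_err N L / R) (layer_op N gs))"

(* Independent of R, which is what the choice R = bad_count n + 1 below exploits. *)
definition bad_count :: "nat \<Rightarrow> nat" where
  "bad_count n = (\<Sum>(N, L)\<in>small_sizes n.
     (L + 1) * 2 ^ (N * L) * 3 ^ (32 * L) * near_count n (approx_err N L))"

lemma card_grid_circuits_small_le:
  assumes "(N, L) \<in> small_sizes n" "R \<ge> 1"
  shows "card (grid_circuits R N L) \<le> (L + 1) * 2 ^ (N * L) * 3 ^ (32 * L) * R ^ (2 ^ n - 2)"
proof -
  have "card (grid_circuits R N L) \<le> (L + 1) * (2 ^ N * (2 * R + 1) ^ 32) ^ L"
    using card_grid_circuits_le by blast
  also have "\<dots> \<le> (L + 1) * (2 ^ N * (3 * R) ^ 32) ^ L"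
    using assms(2) by (intro mult_le_mono2 power_mono mult_le_mono2) auto
  also have "\<dots> = (L + 1) * 2 ^ (N * L) * 3 ^ (32 * L) * R ^ (32 * L)"
    unfolding power_mult_distrib power_mult by (simp only: mult.assoc)
  also have "\<dots> \<le> (L + 1) * 2 ^ (N * L) * 3 ^ (32 * L) * R ^ (2 ^ n - 2)"
    using assms by (intro mult_le_mono2 power_increasing) (auto simp: small_sizes_def)
  finally show ?thesis .
qed

lemma card_bad_choices_le:
  assumes "R \<ge> 1"
  shows "card (bad_choices n R) \<le> bad_count n * R ^ (2 ^ n - 2)"
proof -
  have "card (\<Union>gs\<in>grid_circuits R N L. near_choices n R (approx_err N L / R) (layer_op N gs))
      \<le> (L + 1) * 2 ^ (N * L) * 3 ^ (32 * L) * near_count n (approx_err N L) * R ^ (2 ^ n - 2)"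
    if "(N, L) \<in> small_sizes n" for N L
  proof -
    have "card (\<Union>gs\<in>grid_circuits R N L. near_choices n R (approx_err N L / R) (layer_op N gs))
        \<le> (\<Sum>gs\<in>grid_circuits R N L. card (near_choices n R (approx_err N L / R) (layer_op N gs)))"
      using card_grid_circuits_le by (intro card_UN_le) blast
    also have "\<dots> \<le> (\<Sum>gs\<in>grid_circuits R N L. near_count n (approx_err N L))"
      using assms by (intro sum_mono card_near_choices_le) simp
    also have "\<dots> = card (grid_circuits R N L) * near_count n (approx_err N L)"
      by simp
    also have "\<dots> \<le> (L + 1) * 2 ^ (N * L) * 3 ^ (32 * L) * R ^ (2 ^ n - 2) * near_count n (approx_err N L)"
      using card_grid_circuits_small_le[OF that assms] by (rule mult_le_mono1)
    finally show ?thesis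
      by (simp add: algebra_simps)
  qed
  then have "card (bad_choices n R) \<le> (\<Sum>(N, L)\<in>small_sizes n.
      (L + 1) * 2 ^ (N * L) * 3 ^ (32 * L) * near_count n (approx_err N L) * R ^ (2 ^ n - 2))"
    unfolding bad_choices_def
    by (intro card_UN_le[THEN order_trans] sum_mono finite_small_sizes) auto
  also have "\<dots> = bad_count n * R ^ (2 ^ n - 2)"
    by (simp add: bad_count_def sum_distrib_right case_prod_beta)
  finally show ?thesis .
qed

lemma bad_choices_subset: "bad_choices n R \<subseteq> coeff_choices n R"
  by (auto simp: bad_choices_def near_choices_def)

lemma exists_good_choice:
  assumes "n \<ge> 1"
  shows "\<exists>R>0. \<exists>a\<in>coeff_choices n R. a \<notin> bad_choices n R"
proof -
  define R where "R = bad_count n + 1"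
  have "(2::nat) ^ n \<ge> 2"
    using assms by (metis power_one_right power_increasing one_le_numeral)
  then have "2 ^ n - 1 = Suc (2 ^ n - 2)"
    by simp
  then have "card (coeff_choices n R) = R * R ^ (2 ^ n - 2)"
    by (simp add: card_coeff_choices)
  moreover have "card (bad_choices n R) \<le> bad_count n * R ^ (2 ^ n - 2)"
    by (rule card_bad_choices_le) (simp add: R_def)
  moreover have "bad_count n * R ^ (2 ^ n - 2) < R * R ^ (2 ^ n - 2)"
    by (simp add: R_def)
  ultimately have "card (bad_choices n R) < card (coeff_choices n R)"
    by linarith
  moreover have "finite (bad_choices n R)"
    using finite_subset[OF bad_choices_subset] by (simp add: coeff_choices_def finite_PiE)
  ultimately have "\<not> coeff_choices n R \<subseteq> bad_choices n R"
    using card_mono leD by blast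
  then show ?thesis
    by (auto simp: R_def)
qed

lemma apply_op_indicator: "x \<in> basis N \<Longrightarrow> apply_op N A (\<lambda>z. if z = x then 1 else 0) y = A y x"
  by (simp add: apply_op_def if_distrib[of "\<lambda>t. _ * t"] finite_basis cong: if_cong)

lemma embeds_diag:
  assumes "embeds n m F M" "y \<in> basis n"
  shows "M y y = F y y"
proof -
  define e :: qvec where "e z = (if z = y then 1 else 0)" for z
  have y: "y \<in> basis (n + m)"
    using basis_mono[OF _ assms(2)] by simp
  have "zext n e = e"
    using assms(2) by (auto simp: zext_def e_def)
  then have "apply_op (n + m) M e y = zext n (apply_op n F e) y"
    using assms(1) y unfolding embeds_def by metis
  then show ?thesis
    using assms(2) y unfolding e_def by (simp add: apply_op_indicator zext_def)
qed

lemma bad_choicesI: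
  assumes "a \<in> coeff_choices n R" "(N, L) \<in> small_sizes n" "gs \<in> grid_circuits R N L"
    and "\<forall>y\<in>basis n. cmod (layer_op N gs y y - exp (\<i> * of_real (phase_poly n (phase_coeffs n R a) y)))
      \<le> approx_err N L / R"
  shows "a \<in> bad_choices n R"
proof -
  have "a \<in> near_choices n R (approx_err N L / R) (layer_op N gs)"
    using assms(1,4) by (simp add: near_choices_def)
  then show ?thesis
    using assms(2,3) unfolding bad_choices_def by (intro UN_I[of "(N, L)"]) auto
qed

lemma shallow_circuit_approx:
  assumes circ: "circuit_of_depth (n + m) d M" and small: "32 * d * (n + m) + 2 \<le> 2 ^ n" and R: "R > 0"
  shows "\<exists>(N, L)\<in>small_sizes n. \<exists>gs\<in>grid_circuits R N L.
    \<forall>y\<in>basis n. cmod (layer_op N gs y y - M y y) \<le> approx_err N L / R"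
proof (cases "d = 0")
  case True
  \<comment> \<open>n + m may exceed 2^n, so compare with the empty circuit on the n data qubits instead.\<close>
  then have "\<forall>y\<in>basis n. M y y = idm y y"
    using circ basis_mono[of n "n + m"] by (auto simp: circuit_of_depth_def)
  moreover have "(n, 0) \<in> small_sizes n" "[] \<in> grid_circuits R n 0"
    using small by (auto simp: small_sizes_def grid_circuits_def less_exp less_imp_le)
  ultimately show ?thesis
    by (intro bexI[of _ "(n, 0)"]) (auto simp: layer_op_def approx_err_def intro!: bexI[of _ "[]"])
next
  case False
  obtain gs where gs: "gs \<in> grid_circuits R (n + m) (d * (n + m))"
    and close: "entry_bound (n + m) (approx_err (n + m) (d * (n + m)) / R) (layer_op (n + m) gs - M)"
    using circuit_approx_by_grid_circuit[OF circ R] by blast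
  have "n + m \<le> 32 * d * (n + m)"
    using False by simp
  then have "n + m \<le> 2 ^ n"
    using small by linarith
  then have "(n + m, d * (n + m)) \<in> small_sizes n"
    using small by (simp add: small_sizes_def mult.assoc)
  moreover have "\<forall>y\<in>basis n. cmod (layer_op (n + m) gs y y - M y y) \<le> approx_err (n + m) (d * (n + m)) / R"
    using close basis_mono[of n "n + m"] by (simp add: entry_bound_def)
  ultimately show ?thesis
    using gs by blast
qed

lemma phase_circuit_depth_bound:
  assumes n: "n \<ge> 1"
  shows "\<exists>c. \<forall>m d M. circuit_of_depth (n + m) d M \<longrightarrow> embeds n m (cop n (phase_circuit n c)) M \<longrightarrow>
    2 ^ n \<le> 33 * d * (n + m)"
proof -
  obtain R a where R: "R > 0" and a: "a \<in> coeff_choices n R" and good: "a \<notin> bad_choices n R"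
    using exists_good_choice[OF n] by blast
  show ?thesis
  proof (intro exI[of _ "phase_coeffs n R a"] allI impI)
    fix m d M
    assume circ: "circuit_of_depth (n + m) d M"
      and emb: "embeds n m (cop n (phase_circuit n (phase_coeffs n R a))) M"
    show "2 ^ n \<le> 33 * d * (n + m)"
    proof (rule ccontr)
      assume "\<not> 2 ^ n \<le> 33 * d * (n + m)"
      moreover have "(2::nat) \<le> 2 ^ n"
        using n by (metis power_one_right power_increasing one_le_numeral)
      ultimately have "32 * d * (n + m) + 2 \<le> 2 ^ n"
        by (cases "d = 0") auto
      then obtain N L gs where "(N, L) \<in> small_sizes n" "gs \<in> grid_circuits R N L"
        and "\<forall>y\<in>basis n. cmod (layer_op N gs y y - M y y) \<le> approx_err N L / R"
        using shallow_circuit_approx[OF circ _ R] by blast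
      moreover have "\<forall>y\<in>basis n. M y y = exp (\<i> * of_real (phase_poly n (phase_coeffs n R a) y))"
        using embeds_diag[OF emb] cop_phase_circuit_diag by simp
      ultimately have "a \<in> bad_choices n R"
        using a by (intro bad_choicesI) auto
      with good show False ..
    qed
  qed
qed

theorem corollary1:
  "\<exists>C :: nat \<Rightarrow> cgate list.
     (\<forall>n\<ge>1. cnot_diag_circuit n (C n)) \<and>
     (\<forall>p :: real poly. \<exists>q :: real poly. \<forall>n\<ge>1. \<forall>m d M.
        real m \<le> poly p (real n) \<longrightarrow>
        circuit_of_depth (n + m) d M \<longrightarrow>
        embeds n m (cop n (C n)) M \<longrightarrow>
        2 ^ n \<le> real d * poly q (real n))"
proof -
  obtain c where hard: "\<And>n m d M. n \<ge> 1 \<Longrightarrow> circuit_of_depth (n + m) d M \<Longrightarrow>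
      embeds n m (cop n (phase_circuit n (c n))) M \<Longrightarrow> 2 ^ n \<le> 33 * d * (n + m)"
    using choice[OF allI[of "\<lambda>n. \<exists>c. n \<ge> 1 \<longrightarrow> _ c"]] phase_circuit_depth_bound by metis
  have "2 ^ n \<le> real d * poly (smult 33 (pCons 0 1 + p)) (real n)"
    if "n \<ge> 1" "real m \<le> poly p (real n)" "circuit_of_depth (n + m) d M"
      "embeds n m (cop n (phase_circuit n (c n))) M" for p n m d M
  proof -
    have "(2::real) ^ n \<le> 33 * real d * (real n + real m)"
      using hard[OF that(1,3,4)] by (metis of_nat_add of_nat_le_iff of_nat_mult of_nat_numeral of_nat_power)
    also have "\<dots> \<le> real d * poly (smult 33 (pCons 0 1 + p)) (real n)"
      using that(2) by (simp add: algebra_simps mult_left_mono)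
    finally show ?thesis .
  qed
  then show ?thesis
    by (intro exI[of _ "\<lambda>n. phase_circuit n (c n)"]) (blast intro: phase_circuit_ok)
qed

end
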